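(* For every $m\ge1$, the $\mathfrak g\otimes\mathbb C[t]$-module $L^{\mathrm{gr}}_m=F_m/F_{m-1}$ is generated, under the action of $U(\mathfrak g\otimes\mathbb C[t])$, by the images $\bar w_{i_1,\dots,i_m}\in F_m/F_{m-1}$ of the vectors $w_{i_1,\dots,i_m}=(e_\theta\otimes t^{i_1})\cdots(e_\theta\otimes t^{i_m})v_0$ with $-m\ge i_1\ge\cdots\ge i_m$.
   Context: $\mathfrak g$ is a finite-dimensional simple complex Lie algebra, $\hat{\mathfrak g}$ its affine Kac–Moody algebra, $L$ the basic representation with highest weight vector $v_0$: $(\mathfrak g\otimes\mathbb C[t])v_0=0$, $L=U(\mathfrak g\otimes t^{-1}\mathbb C[t^{-1}])v_0$. $\theta$ is the highest root and $e_\theta$ a highest weight vector of the adjoint representation. PBW filtration: $F_{-1}=0$, $F_0=\mathbb Cv_0$, $F_{m+1}=F_m+\mathrm{span}\{(x\otimes t^{-i})w: x\in\mathfrak g,i>0,w\in F_m\}$; each $F_m$ is $\mathfrak g\otimes\mathbb C[t]$-stable, giving a $\mathfrak g\otimes\mathbb C[t]$-module structure on $F_m/F_{m-1}$. *)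

theory Defs
  imports Complex_Main
begin

definition lie_algebra :: "(complex \<Rightarrow> 'g::ab_group_add \<Rightarrow> 'g) \<Rightarrow> ('g \<Rightarrow> 'g \<Rightarrow> 'g) \<Rightarrow> bool" where
  "lie_algebra sc br \<longleftrightarrow> vector_space sc
     \<and> (\<forall>a b x y z. br (sc a x + sc b y) z = sc a (br x z) + sc b (br y z))
     \<and> (\<forall>a b x y z. br z (sc a x + sc b y) = sc a (br z x) + sc b (br z y))
     \<and> (\<forall>x. br x x = 0)
     \<and> (\<forall>x y z. br x (br y z) + br y (br z x) + br z (br x y) = 0)"

definition fin_dim :: "(complex \<Rightarrow> 'g::ab_group_add \<Rightarrow> 'g) \<Rightarrow> bool" where
  "fin_dim sc \<longleftrightarrow> (\<exists>B. finite B \<and> module.span sc B = UNIV)"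

definition lie_subalgebra :: "(complex \<Rightarrow> 'g::ab_group_add \<Rightarrow> 'g) \<Rightarrow> ('g \<Rightarrow> 'g \<Rightarrow> 'g) \<Rightarrow> 'g set \<Rightarrow> bool" where
  "lie_subalgebra sc br S \<longleftrightarrow> module.subspace sc S \<and> (\<forall>x\<in>S. \<forall>y\<in>S. br x y \<in> S)"

definition lie_ideal :: "(complex \<Rightarrow> 'g::ab_group_add \<Rightarrow> 'g) \<Rightarrow> ('g \<Rightarrow> 'g \<Rightarrow> 'g) \<Rightarrow> 'g set \<Rightarrow> bool" where
  "lie_ideal sc br I \<longleftrightarrow> module.subspace sc I \<and> (\<forall>x. \<forall>y\<in>I. br x y \<in> I)"

definition simple_lie_algebra :: "(complex \<Rightarrow> 'g::ab_group_add \<Rightarrow> 'g) \<Rightarrow> ('g \<Rightarrow> 'g \<Rightarrow> 'g) \<Rightarrow> bool" where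
  "simple_lie_algebra sc br \<longleftrightarrow> lie_algebra sc br
     \<and> (\<exists>x y. br x y \<noteq> 0)
     \<and> (\<forall>I. lie_ideal sc br I \<longrightarrow> I = {0} \<or> I = UNIV)"

definition derived :: "(complex \<Rightarrow> 'g::ab_group_add \<Rightarrow> 'g) \<Rightarrow> ('g \<Rightarrow> 'g \<Rightarrow> 'g) \<Rightarrow> 'g set \<Rightarrow> 'g set" where
  "derived sc br S = module.span sc {br x y | x y. x \<in> S \<and> y \<in> S}"

definition solvable_subalgebra :: "(complex \<Rightarrow> 'g::ab_group_add \<Rightarrow> 'g) \<Rightarrow> ('g \<Rightarrow> 'g \<Rightarrow> 'g) \<Rightarrow> 'g set \<Rightarrow> bool" where
  "solvable_subalgebra sc br S \<longleftrightarrow> lie_subalgebra sc br S \<and> (\<exists>n. (derived sc br ^^ n) S = {0})"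

definition borel_subalgebra :: "(complex \<Rightarrow> 'g::ab_group_add \<Rightarrow> 'g) \<Rightarrow> ('g \<Rightarrow> 'g \<Rightarrow> 'g) \<Rightarrow> 'g set \<Rightarrow> bool" where
  "borel_subalgebra sc br B \<longleftrightarrow> solvable_subalgebra sc br B
     \<and> (\<forall>S. solvable_subalgebra sc br S \<and> B \<subseteq> S \<longrightarrow> S = B)"

text \<open>A highest weight vector of the adjoint representation (with respect to some
  Borel subalgebra b, i.e. some choice of Cartan and positive roots): a nonzero
  vector whose line is stable under ad b.  For simple g these are exactly the
  nonzero highest root vectors e_theta.\<close>
definition highest_root_vector :: "(complex \<Rightarrow> 'g::ab_group_add \<Rightarrow> 'g) \<Rightarrow> ('g \<Rightarrow> 'g \<Rightarrow> 'g) \<Rightarrow> 'g \<Rightarrow> bool" where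
  "highest_root_vector sc br e \<longleftrightarrow> e \<noteq> 0 \<and>
     (\<exists>B. borel_subalgebra sc br B \<and> (\<forall>x\<in>B. \<exists>c. br x e = sc c e))"

text \<open>Normalized invariant form: symmetric, bilinear, invariant, and normalized by
  (theta,theta) = 2, i.e. kappa(e_theta, f_theta) = 1 for an sl2-triple
  (e_theta, [e_theta,f_theta], f_theta).\<close>
definition normalized_invariant_form ::
  "(complex \<Rightarrow> 'g::ab_group_add \<Rightarrow> 'g) \<Rightarrow> ('g \<Rightarrow> 'g \<Rightarrow> 'g) \<Rightarrow> 'g \<Rightarrow> ('g \<Rightarrow> 'g \<Rightarrow> complex) \<Rightarrow> bool" where
  "normalized_invariant_form sc br e \<kappa> \<longleftrightarrow>
     (\<forall>a b x y z. \<kappa> (sc a x + sc b y) z = a * \<kappa> x z + b * \<kappa> y z)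
     \<and> (\<forall>x y. \<kappa> x y = \<kappa> y x)
     \<and> (\<forall>x y z. \<kappa> (br x y) z = \<kappa> x (br y z))
     \<and> (\<exists>f. br (br e f) e = sc 2 e \<and> br (br e f) f = sc (-2) f \<and> \<kappa> e f = 1)"

text \<open>The basic representation of the affine algebra: operators rho x n = x \<otimes> t^n
  on L (complex vector space with scalar multiplication scv), central element
  acting by 1 (level 1), vacuum vector v0 killed by g \<otimes> C[t], L irreducible.\<close>
definition basic_rep ::
  "(complex \<Rightarrow> 'g::ab_group_add \<Rightarrow> 'g) \<Rightarrow> ('g \<Rightarrow> 'g \<Rightarrow> 'g) \<Rightarrow> ('g \<Rightarrow> 'g \<Rightarrow> complex)
   \<Rightarrow> (complex \<Rightarrow> 'v::ab_group_add \<Rightarrow> 'v) \<Rightarrow> ('g \<Rightarrow> int \<Rightarrow> 'v \<Rightarrow> 'v) \<Rightarrow> 'v \<Rightarrow> bool" where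
  "basic_rep sc br \<kappa> scv \<rho> v0 \<longleftrightarrow> vector_space scv
     \<and> (\<forall>x n a b u w. \<rho> x n (scv a u + scv b w) = scv a (\<rho> x n u) + scv b (\<rho> x n w))
     \<and> (\<forall>x y n a b u. \<rho> (sc a x + sc b y) n u = scv a (\<rho> x n u) + scv b (\<rho> y n u))
     \<and> (\<forall>x y m n u. \<rho> x m (\<rho> y n u) - \<rho> y n (\<rho> x m u)
           = \<rho> (br x y) (m + n) u + (if m + n = 0 then scv (of_int m * \<kappa> x y) u else 0))
     \<and> v0 \<noteq> 0
     \<and> (\<forall>x n. n \<ge> 0 \<longrightarrow> \<rho> x n v0 = 0)
     \<and> (\<forall>W. module.subspace scv W \<and> (\<forall>x n. \<forall>w\<in>W. \<rho> x n w \<in> W) \<longrightarrow> W = {0} \<or> W = UNIV)"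

definition apply_word :: "('g \<Rightarrow> int \<Rightarrow> 'v \<Rightarrow> 'v) \<Rightarrow> ('g \<times> int) list \<Rightarrow> 'v \<Rightarrow> 'v" where
  "apply_word \<rho> ws v = foldr (\<lambda>(x, n) u. \<rho> x n u) ws v"

fun pbw_filt :: "(complex \<Rightarrow> 'v::ab_group_add \<Rightarrow> 'v) \<Rightarrow> ('g \<Rightarrow> int \<Rightarrow> 'v \<Rightarrow> 'v) \<Rightarrow> 'v \<Rightarrow> nat \<Rightarrow> 'v set" where
  "pbw_filt scv \<rho> v0 0 = module.span scv {v0}"
| "pbw_filt scv \<rho> v0 (Suc m) =
     module.span scv (pbw_filt scv \<rho> v0 m \<union> {\<rho> x n w | x n w. n < 0 \<and> w \<in> pbw_filt scv \<rho> v0 m})"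

definition w_vec :: "('g \<Rightarrow> int \<Rightarrow> 'v \<Rightarrow> 'v) \<Rightarrow> 'g \<Rightarrow> 'v \<Rightarrow> int list \<Rightarrow> 'v" where
  "w_vec \<rho> e v0 is = apply_word \<rho> (map (\<lambda>i. (e, i)) is) v0"

end

theory Submission
  imports Defs
begin

text \<open>Modulo \<open>F\<^sub>m\<^sub>-\<^sub>1\<close>, \<open>F\<^sub>m\<close> is spanned by the words
  \<open>(x\<^sub>1 \<otimes> t\<^sup>n\<^sup>1) \<cdots> (x\<^sub>m \<otimes> t\<^sup>n\<^sup>m) v\<^sub>0\<close> with all modes negative.
  Commuting a nonnegative mode \<open>a \<otimes> t\<^sup>k\<close> through such a word shortens it, except
  that a letter \<open>y \<otimes> t\<^sup>s\<close> with \<open>s + k < 0\<close> turns into \<open>[a, y] \<otimes> t\<^sup>s\<^sup>+\<^sup>k\<close>.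
  Hence, with all other letters fixed, the elements that may stand in one slot (with every
  negative mode) form a Lie ideal of g. Filling the slots from the left, \<open>e\<^sub>\<theta>\<close> in a
  slot is obtained from \<open>[h, e\<^sub>\<theta>] = 2 e\<^sub>\<theta>\<close> and a letter \<open>e\<^sub>\<theta> \<otimes> t\<^sup>s\<close> with
  \<open>s\<close> below all earlier modes, and since g is simple the ideal generated by \<open>e\<^sub>\<theta>\<close> is g.\<close>

lemma apply_word_Nil [simp]: "apply_word \<rho> [] v = v"
  by (simp add: apply_word_def)

lemma apply_word_Cons [simp]: "apply_word \<rho> ((x, n) # ws) v = \<rho> x n (apply_word \<rho> ws v)"
  by (simp add: apply_word_def)

lemma mode_bound: "\<exists>B::int. 0 \<le> B \<and> (\<forall>q\<in>set ws. \<bar>snd q\<bar> \<le> B)"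
  by (rule exI[of _ "Max (insert 0 ((\<lambda>q. \<bar>snd q\<bar>) ` set ws))"]) auto

abbreviation negative_word :: "('g \<times> int) list \<Rightarrow> bool" where
  "negative_word ws \<equiv> \<forall>q\<in>set ws. snd q < 0"

locale vacuum_module = V: vector_space scv + G: vector_space sc
  for scv :: "complex \<Rightarrow> 'v::ab_group_add \<Rightarrow> 'v" and sc :: "complex \<Rightarrow> 'g::ab_group_add \<Rightarrow> 'g" +
  fixes br :: "'g \<Rightarrow> 'g \<Rightarrow> 'g" and \<kappa> :: "'g \<Rightarrow> 'g \<Rightarrow> complex"
    and \<rho> :: "'g \<Rightarrow> int \<Rightarrow> 'v \<Rightarrow> 'v" and v0 :: 'v
  assumes linear_vector: "\<And>x n a b u w. \<rho> x n (scv a u + scv b w) = scv a (\<rho> x n u) + scv b (\<rho> x n w)"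
    and linear_algebra: "\<And>x y n a b u. \<rho> (sc a x + sc b y) n u = scv a (\<rho> x n u) + scv b (\<rho> y n u)"
    and commutator: "\<And>x y m n u. \<rho> x m (\<rho> y n u) - \<rho> y n (\<rho> x m u)
           = \<rho> (br x y) (m + n) u + (if m + n = 0 then scv (of_int m * \<kappa> x y) u else 0)"
    and vacuum: "\<And>x n. n \<ge> 0 \<Longrightarrow> \<rho> x n v0 = 0"
begin

abbreviation F where "F j \<equiv> pbw_filt scv \<rho> v0 j"
abbreviation aw where "aw ws \<equiv> apply_word \<rho> ws v0"

lemma F_0: "F 0 = V.span {v0}"
  by simp

lemma F_Suc: "F (Suc j) = V.span (F j \<union> {\<rho> x n w | x n w. n < 0 \<and> w \<in> F j})"
  by simp

declare pbw_filt.simps [simp del]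

lemma rho_add: "\<rho> x n (u + w) = \<rho> x n u + \<rho> x n w"
  using linear_vector[of x n 1 u 1 w] by simp

lemma rho_scale: "\<rho> x n (scv c u) = scv c (\<rho> x n u)"
  using linear_vector[of x n c u 0 0] by simp

lemma rho_zero: "\<rho> x n 0 = 0"
  using rho_scale[of x n 0 0] by simp

lemma rho_diff: "\<rho> x n (u - w) = \<rho> x n u - \<rho> x n w"
  using linear_vector[of x n 1 u "-1" w] by simp

lemma rho_commute: "\<rho> x m (\<rho> y n u) = \<rho> y n (\<rho> x m u) + \<rho> (br x y) (m + n) u
      + (if m + n = 0 then scv (of_int m * \<kappa> x y) u else 0)"
  using commutator[of x m y n u] by (simp add: algebra_simps diff_eq_eq)

lemma apply_word_slot_linear:
  "apply_word \<rho> (ws1 @ (sc a x + sc b y, t) # ws2) v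
     = scv a (apply_word \<rho> (ws1 @ (x, t) # ws2) v) + scv b (apply_word \<rho> (ws1 @ (y, t) # ws2) v)"
proof (induction ws1)
  case Nil
  then show ?case by (simp add: linear_algebra)
next
  case (Cons p ws1)
  then show ?case by (cases p) (simp add: linear_vector)
qed

lemma rho_span_closed:
  assumes "V.subspace T" and "\<And>w. w \<in> S \<Longrightarrow> \<rho> x n w \<in> T" and "u \<in> V.span S"
  shows "\<rho> x n u \<in> T"
proof -
  have "V.subspace {u. \<rho> x n u \<in> T}"
    using assms(1) by (intro V.subspaceI)
      (auto simp: rho_zero rho_add rho_scale V.subspace_0 V.subspace_add V.subspace_scale)
  then have "V.span S \<subseteq> {u. \<rho> x n u \<in> T}"
    using assms(2) by (intro V.span_minimal) auto
  then show ?thesis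
    using assms(3) by blast
qed

lemma F_subspace: "V.subspace (F j)"
  by (cases j) (auto simp: F_0 F_Suc)

lemma F_subset_Suc: "F j \<subseteq> F (Suc j)"
  by (auto simp: F_Suc intro: V.span_base)

lemma F_mono: "i \<le> j \<Longrightarrow> F i \<subseteq> F j"
  using lift_Suc_mono_le[of F, OF F_subset_Suc] .

lemma F_Suc_neg_mode: "n < 0 \<Longrightarrow> w \<in> F j \<Longrightarrow> \<rho> x n w \<in> F (Suc j)"
  unfolding F_Suc by (auto intro!: V.span_base)

lemma F_central_term: "u \<in> F j \<Longrightarrow> (if b then scv c u else 0) \<in> F j"
  using F_subspace V.subspace_scale V.subspace_0 by auto

lemma F_nonneg_mode_closed: "0 \<le> n \<Longrightarrow> u \<in> F j \<Longrightarrow> \<rho> x n u \<in> F j"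
proof (induction j arbitrary: x n u)
  case 0
  have "\<rho> x n v0 \<in> V.span {v0}"
    using vacuum[OF 0(1)] V.span_zero by simp
  then show ?case
    using 0(2) unfolding F_0 by (auto intro: rho_span_closed[OF V.subspace_span])
next
  case (Suc j)
  have old: "\<rho> x n w \<in> F (Suc j)" if "w \<in> F j" for w
    using Suc.IH[OF Suc.prems(1) that] F_subset_Suc by auto
  have new: "\<rho> x n (\<rho> y t w) \<in> F (Suc j)" if "t < 0" "w \<in> F j" for y t w
  proof -
    have "\<rho> y t (\<rho> x n w) \<in> F (Suc j)"
      using F_Suc_neg_mode[OF \<open>t < 0\<close> Suc.IH[OF Suc.prems(1) \<open>w \<in> F j\<close>]] .
    moreover have "\<rho> (br x y) (n + t) w \<in> F (Suc j)"
    proof (cases "n + t < 0")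
      case True
      then show ?thesis
        using F_Suc_neg_mode \<open>w \<in> F j\<close> by blast
    next
      case False
      then have "\<rho> (br x y) (n + t) w \<in> F j"
        using Suc.IH \<open>w \<in> F j\<close> by simp
      then show ?thesis
        using F_subset_Suc by blast
    qed
    moreover have "(if n + t = 0 then scv (of_int n * \<kappa> x y) w else 0) \<in> F (Suc j)"
      using F_central_term F_subset_Suc that by blast
    ultimately show ?thesis
      by (subst rho_commute) (intro V.subspace_add[OF F_subspace])
  qed
  show ?case
    by (rule rho_span_closed[OF F_subspace _ Suc.prems(2)[unfolded F_Suc]]) (auto intro: old new)
qed

lemma nonneg_word_F_closed:
  "\<forall>q\<in>set ws. 0 \<le> snd q \<Longrightarrow> u \<in> F j \<Longrightarrow> apply_word \<rho> ws u \<in> F j"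
  by (induction ws) (auto intro: F_nonneg_mode_closed)

lemma negative_word_in_F: "negative_word ws \<Longrightarrow> aw ws \<in> F (length ws)"
  by (induction ws) (auto simp: F_0 intro: V.span_base F_Suc_neg_mode)

lemma F_subset_span_negative_words:
  "F j \<subseteq> V.span {aw ws | ws. negative_word ws \<and> length ws \<le> j}"
proof (induction j)
  case 0
  have "aw [] \<in> {aw ws | ws. negative_word ws \<and> length ws \<le> 0}"
    by (intro CollectI exI[of _ "[]"]) simp
  then show ?case
    unfolding F_0 by (intro V.span_mono) auto
next
  case (Suc j)
  let ?S = "V.span {aw ws | ws. negative_word ws \<and> length ws \<le> Suc j}"
  have "V.span {aw ws | ws. negative_word ws \<and> length ws \<le> j} \<subseteq> ?S"
    by (rule V.span_mono) auto
  with Suc.IH have "F j \<subseteq> ?S"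
    by (rule subset_trans)
  moreover have "\<rho> x n w \<in> ?S" if "n < 0" "w \<in> F j" for x n w
  proof (rule rho_span_closed[OF V.subspace_span])
    show "w \<in> V.span {aw ws | ws. negative_word ws \<and> length ws \<le> j}"
      using Suc.IH that(2) by blast
    fix u assume "u \<in> {aw ws | ws. negative_word ws \<and> length ws \<le> j}"
    then obtain ws where "u = aw ws" "negative_word ws" "length ws \<le> j"
      by blast
    then have "\<rho> x n u \<in> {aw ws | ws. negative_word ws \<and> length ws \<le> Suc j}"
      using that(1) by (intro CollectI exI[of _ "(x, n) # ws"]) auto
    then show "\<rho> x n u \<in> ?S"
      by (rule V.span_base)
  qed
  ultimately have "F j \<union> {\<rho> x n w | x n w. n < 0 \<and> w \<in> F j} \<subseteq> ?S"
    by blast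
  then show ?case
    unfolding F_Suc by (rule V.span_minimal[OF _ V.subspace_span])
qed

text \<open>Each commutator with a letter either removes it (its mode becomes nonnegative) or
  keeps the length, and at the end \<open>a \<otimes> t\<^sup>k\<close> kills \<open>v\<^sub>0\<close>.\<close>

lemma neg_mode_after_nonneg_mode:
  assumes "0 \<le> k" and "s < 0" and "\<forall>q\<in>set ws. snd q < 0 \<and> - k \<le> snd q"
  shows "\<rho> y s (\<rho> a k (aw ws)) \<in> F (length ws)"
  using assms(2,3)
proof (induction ws arbitrary: y s)
  case Nil
  then show ?case
    using vacuum[OF assms(1)] rho_zero F_subspace V.subspace_0 by simp
next
  case (Cons p ws)
  obtain z r where p: "p = (z, r)"
    by (cases p)
  let ?u = "aw ws"
  have r: "r < 0" "0 \<le> k + r"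
    using Cons.prems p by auto
  have u: "?u \<in> F (length ws)"
    using Cons.prems(2) by (intro negative_word_in_F) auto
  have "\<rho> z r (\<rho> a k ?u) \<in> F (length ws)"
    using Cons.IH r Cons.prems(2) by auto
  moreover have "\<rho> (br a z) (k + r) ?u \<in> F (length ws)"
    using F_nonneg_mode_closed[OF r(2) u] .
  moreover have "(if k + r = 0 then scv (of_int k * \<kappa> a z) ?u else 0) \<in> F (length ws)"
    using F_central_term[OF u] .
  ultimately have "\<rho> a k (aw (p # ws)) \<in> F (length ws)"
    using F_subspace V.subspace_add p by (simp add: rho_commute[of a k z r])
  then show ?case
    using F_Suc_neg_mode[OF Cons.prems(1)] by simp
qed

lemma nonneg_mode_into_slot:
  assumes k: "0 \<le> k" and modes: "\<forall>q\<in>set (ws1 @ ws2). snd q < 0 \<and> - k \<le> snd q"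
    and s: "s + k < 0"
  shows "\<rho> a k (aw (ws1 @ (y, s) # ws2)) - aw (ws1 @ (br a y, s + k) # ws2)
           \<in> F (length ws1 + length ws2)"
  using modes
proof (induction ws1)
  case Nil
  have "\<rho> y s (\<rho> a k (aw ws2)) \<in> F (length ws2)"
    using Nil k s by (intro neg_mode_after_nonneg_mode) auto
  then show ?case
    using s by (simp add: rho_commute[of a k y s] add.commute)
next
  case (Cons p ws1)
  obtain z r where p: "p = (z, r)"
    by (cases p)
  let ?u = "aw (ws1 @ (y, s) # ws2)"
  let ?v = "aw (ws1 @ (br a y, s + k) # ws2)"
  let ?L = "Suc (length ws1 + length ws2)"
  have r: "r < 0" "0 \<le> k + r"
    using Cons.prems p by auto
  have u: "?u \<in> F ?L"
    using negative_word_in_F[of "ws1 @ (y, s) # ws2"] Cons.prems k s by auto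
  have "\<rho> z r (\<rho> a k ?u - ?v) \<in> F ?L"
    using Cons.IH Cons.prems r(1) by (auto intro: F_Suc_neg_mode)
  moreover have "\<rho> (br a z) (k + r) ?u \<in> F ?L"
    using F_nonneg_mode_closed[OF r(2) u] .
  moreover have "(if k + r = 0 then scv (of_int k * \<kappa> a z) ?u else 0) \<in> F ?L"
    using F_central_term[OF u] .
  moreover have "\<rho> a k (aw (p # ws1 @ (y, s) # ws2)) - aw (p # ws1 @ (br a y, s + k) # ws2)
     = \<rho> z r (\<rho> a k ?u - ?v) + \<rho> (br a z) (k + r) ?u
       + (if k + r = 0 then scv (of_int k * \<kappa> a z) ?u else 0)"
    by (simp add: p rho_commute[of a k z r] rho_diff algebra_simps)
  ultimately show ?case
    using F_subspace[of ?L] V.subspace_add by simp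
qed

end

locale current_submodule = vacuum_module +
  fixes N and m :: nat
  assumes N_subspace: "V.subspace N"
    and F_pred_subset: "F (m - 1) \<subseteq> N"
    and N_nonneg_mode_closed: "\<And>x n u. 0 \<le> n \<Longrightarrow> u \<in> N \<Longrightarrow> \<rho> x n u \<in> N"
begin

lemma bracket_into_slot:
  assumes k: "0 \<le> k" and modes: "\<forall>q\<in>set (ws1 @ ws2). snd q < 0 \<and> - k \<le> snd q"
    and t: "t < 0" and len: "length ws1 + length ws2 < m"
    and src: "aw (ws1 @ (y, t - k) # ws2) \<in> N"
  shows "aw (ws1 @ (br a y, t) # ws2) \<in> N"
proof -
  let ?r = "\<rho> a k (aw (ws1 @ (y, t - k) # ws2))"
  have "?r - aw (ws1 @ (br a y, t) # ws2) \<in> F (length ws1 + length ws2)"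
    using nonneg_mode_into_slot[OF k modes, of "t - k" a y] t by simp
  also have "\<dots> \<subseteq> F (m - 1)"
    using len by (intro F_mono) simp
  also have "\<dots> \<subseteq> N"
    by (rule F_pred_subset)
  finally have "?r - (?r - aw (ws1 @ (br a y, t) # ws2)) \<in> N"
    using N_nonneg_mode_closed[OF k src] N_subspace V.subspace_diff by blast
  then show ?thesis
    by simp
qed

lemma slot_lie_ideal:
  assumes neg: "negative_word (ws1 @ ws2)" and len: "length ws1 + length ws2 < m"
  shows "lie_ideal sc br {x. \<forall>t<0. aw (ws1 @ (x, t) # ws2) \<in> N}"
    (is "lie_ideal sc br ?W")
proof -
  have "G.subspace ?W"
  proof (rule G.subspaceI)
    show "0 \<in> ?W"
      using apply_word_slot_linear[of ws1 0 0 0 0 _ ws2 v0] N_subspace V.subspace_0 by simp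
    show "x + y \<in> ?W" if "x \<in> ?W" "y \<in> ?W" for x y
      using that apply_word_slot_linear[of ws1 1 x 1 y _ ws2 v0] N_subspace V.subspace_add by simp
    show "sc c x \<in> ?W" if "x \<in> ?W" for c x
      using that apply_word_slot_linear[of ws1 c x 0 0 _ ws2 v0] N_subspace V.subspace_scale by simp
  qed
  moreover have "br a y \<in> ?W" if "y \<in> ?W" for a y
  proof -
    obtain B where "0 \<le> B" "\<And>q. q \<in> set (ws1 @ ws2) \<Longrightarrow> \<bar>snd q\<bar> \<le> B"
      using mode_bound[of "ws1 @ ws2"] by blast
    then have modes: "\<forall>q\<in>set (ws1 @ ws2). snd q < 0 \<and> - B \<le> snd q"
      using neg by force
    show ?thesis
    proof (intro CollectI allI impI)
      fix t :: int assume "t < 0"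
      have "aw (ws1 @ (y, t - B) # ws2) \<in> N"
        using that \<open>t < 0\<close> \<open>0 \<le> B\<close> by simp
      then show "aw (ws1 @ (br a y, t) # ws2) \<in> N"
        by (rule bracket_into_slot[OF \<open>0 \<le> B\<close> modes \<open>t < 0\<close> len])
    qed
  qed
  ultimately show ?thesis
    unfolding lie_ideal_def by blast
qed

lemma e_prefixed_words_in_N:
  assumes eigen: "br h e = sc c e" and "c \<noteq> 0"
    and generates: "\<And>W. lie_ideal sc br W \<Longrightarrow> e \<in> W \<Longrightarrow> W = UNIV"
    and top: "\<And>is. length is = m \<Longrightarrow> sorted_wrt (\<ge>) is \<Longrightarrow> \<forall>i\<in>set is. i \<le> - int m
                 \<Longrightarrow> aw (map (Pair e) is) \<in> N"
  shows "length is + length vs = m \<Longrightarrow> sorted_wrt (\<ge>) is \<Longrightarrow> \<forall>i\<in>set is. i \<le> - int m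
           \<Longrightarrow> negative_word vs \<Longrightarrow> aw (map (Pair e) is @ vs) \<in> N"
proof (induction vs arbitrary: "is")
  case Nil
  then show ?case
    using top by simp
next
  case (Cons p vs)
  let ?W = "{x. \<forall>t<0. aw (map (Pair e) is @ (x, t) # vs) \<in> N}"
  have neg: "negative_word (map (Pair e) is @ vs)"
    using Cons.prems by force
  have "e \<in> ?W"
  proof (intro CollectI allI impI)
    fix t :: int assume "t < 0"
    obtain B where "0 \<le> B" and B: "\<And>q. q \<in> set (map (Pair e) is @ vs) \<Longrightarrow> \<bar>snd q\<bar> \<le> B"
      using mode_bound[of "map (Pair e) is @ vs"] by blast
    define k where "k = B + int m"
    \<comment> \<open>\<open>t - k\<close> lies below every mode of the word, so it extends the sorted prefix.\<close>
    have below: "t - k \<le> i" if "i \<in> set is" for i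
      using B[of "(e, i)"] that \<open>t < 0\<close> unfolding k_def by auto
    have "aw (map (Pair e) (is @ [t - k]) @ vs) \<in> N"
      using Cons.prems \<open>t < 0\<close> \<open>0 \<le> B\<close> below
      by (intro Cons.IH) (auto simp: sorted_wrt_append k_def)
    moreover have "\<forall>q\<in>set (map (Pair e) is @ vs). snd q < 0 \<and> - k \<le> snd q"
      using neg B \<open>0 \<le> B\<close> unfolding k_def by fastforce
    ultimately have "aw (map (Pair e) is @ (br h e, t) # vs) \<in> N"
      using \<open>0 \<le> B\<close> \<open>t < 0\<close> Cons.prems(1)
      by (intro bracket_into_slot[of k]) (simp_all add: k_def)
    then have "scv c (aw (map (Pair e) is @ (e, t) # vs)) \<in> N"
      using apply_word_slot_linear[of "map (Pair e) is" c e 0 0 t vs v0] eigen by simp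
    then have "scv (inverse c) (scv c (aw (map (Pair e) is @ (e, t) # vs))) \<in> N"
      using N_subspace V.subspace_scale by blast
    then show "aw (map (Pair e) is @ (e, t) # vs) \<in> N"
      using \<open>c \<noteq> 0\<close> by simp
  qed
  moreover have "lie_ideal sc br ?W"
    using neg Cons.prems(1) by (intro slot_lie_ideal) auto
  ultimately have "?W = UNIV"
    using generates by blast
  moreover obtain x t where "p = (x, t)" "t < 0"
    using Cons.prems(4) by (cases p) auto
  ultimately show ?case
    by blast
qed

end

context vacuum_module
begin

lemma pbw_layer_generated_by_e_words:
  assumes "1 \<le> m" and eigen: "br h e = sc c e" and "c \<noteq> 0"
    and generates: "\<And>W. lie_ideal sc br W \<Longrightarrow> e \<in> W \<Longrightarrow> W = UNIV"
  shows "F m = V.span (F (m - 1) \<union>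
       {apply_word \<rho> ws (w_vec \<rho> e v0 is) | ws is.
          (\<forall>p\<in>set ws. snd p \<ge> 0) \<and> length is = m \<and> sorted_wrt (\<ge>) is
          \<and> (\<forall>i\<in>set is. i \<le> - int m)})"
    (is "_ = V.span (_ \<union> ?G)")
proof
  let ?N = "V.span (F (m - 1) \<union> ?G)"
  have "u \<in> F m" if "u \<in> ?G" for u
  proof -
    obtain ws "is" where u: "u = apply_word \<rho> ws (w_vec \<rho> e v0 is)"
      and ws: "\<forall>p\<in>set ws. 0 \<le> snd p" and "length is = m" "\<forall>i\<in>set is. i \<le> - int m"
      using \<open>u \<in> ?G\<close> by blast
    then have "negative_word (map (Pair e) is)"
      using \<open>1 \<le> m\<close> by force
    then have "w_vec \<rho> e v0 is \<in> F m"
      using negative_word_in_F \<open>length is = m\<close> by (fastforce simp: w_vec_def)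
    then show ?thesis
      unfolding u by (rule nonneg_word_F_closed[OF ws])
  qed
  moreover have "F (m - 1) \<subseteq> F m"
    by (rule F_mono) simp
  ultimately have "F (m - 1) \<union> ?G \<subseteq> F m"
    by blast
  then show "?N \<subseteq> F m"
    by (rule V.span_minimal[OF _ F_subspace])
  have stable: "\<rho> x n u \<in> ?N" if "0 \<le> n" "u \<in> ?N" for x n u
  proof (rule rho_span_closed[OF V.subspace_span _ \<open>u \<in> ?N\<close>])
    fix w assume "w \<in> F (m - 1) \<union> ?G"
    then consider "w \<in> F (m - 1)" | "w \<in> ?G"
      by blast
    then have "\<rho> x n w \<in> F (m - 1) \<union> ?G"
    proof cases
      case 1
      then show ?thesis
        using F_nonneg_mode_closed[OF \<open>0 \<le> n\<close>] by blast
    next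
      case 2
      then obtain ws "is" where "w = apply_word \<rho> ws (w_vec \<rho> e v0 is)"
        "\<forall>p\<in>set ws. 0 \<le> snd p" "length is = m" "sorted_wrt (\<ge>) is" "\<forall>i\<in>set is. i \<le> - int m"
        by blast
      then have "\<rho> x n w \<in> ?G"
        using \<open>0 \<le> n\<close> by (intro CollectI exI[of _ "(x, n) # ws"] exI[of _ "is"]) simp
      then show ?thesis
        by (rule UnI2)
    qed
    then show "\<rho> x n w \<in> ?N"
      by (rule V.span_base)
  qed
  interpret current_submodule scv sc br \<kappa> \<rho> v0 ?N m
    by unfold_locales (use stable V.span_superset in blast)+
  have top: "aw (map (Pair e) is) \<in> ?N"
    if "length is = m" "sorted_wrt (\<ge>) is" "\<forall>i\<in>set is. i \<le> - int m" for "is"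
  proof -
    have "apply_word \<rho> [] (w_vec \<rho> e v0 is) \<in> ?G"
      using that by (intro CollectI exI[of _ "[]"] exI[of _ "is"]) simp
    then show ?thesis
      unfolding w_vec_def by (intro V.span_base UnI2) simp
  qed
  have "aw ws \<in> ?N" if "negative_word ws" "length ws \<le> m" for ws
  proof (cases "length ws = m")
    case True
    then have "aw (map (Pair e) [] @ ws) \<in> ?N"
      using that by (intro e_prefixed_words_in_N[OF eigen \<open>c \<noteq> 0\<close> generates top]) simp_all
    then show ?thesis
      by simp
  next
    case False
    then have "F (length ws) \<subseteq> F (m - 1)"
      using that(2) by (intro F_mono) simp
    then show ?thesis
      using negative_word_in_F[OF that(1)] by (blast intro: V.span_base)
  qed
  then have "{aw ws | ws. negative_word ws \<and> length ws \<le> m} \<subseteq> ?N"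
    by auto
  then have "V.span {aw ws | ws. negative_word ws \<and> length ws \<le> m} \<subseteq> ?N"
    by (rule V.span_minimal[OF _ V.subspace_span])
  with F_subset_span_negative_words[of m] show "F m \<subseteq> ?N"
    by (rule subset_trans)
qed

end

theorem corollary6p7:
  fixes sc :: "complex \<Rightarrow> 'g::ab_group_add \<Rightarrow> 'g" and br :: "'g \<Rightarrow> 'g \<Rightarrow> 'g"
    and e :: 'g and \<kappa> :: "'g \<Rightarrow> 'g \<Rightarrow> complex"
    and scv :: "complex \<Rightarrow> 'v::ab_group_add \<Rightarrow> 'v" and \<rho> :: "'g \<Rightarrow> int \<Rightarrow> 'v \<Rightarrow> 'v"
    and v0 :: 'v and m :: nat
  assumes "simple_lie_algebra sc br" and "fin_dim sc"
    and "highest_root_vector sc br e"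
    and "normalized_invariant_form sc br e \<kappa>"
    and "basic_rep sc br \<kappa> scv \<rho> v0"
    and "m \<ge> 1"
  shows "pbw_filt scv \<rho> v0 m =
     module.span scv (pbw_filt scv \<rho> v0 (m - 1) \<union>
       {apply_word \<rho> ws (w_vec \<rho> e v0 is) | ws is.
          (\<forall>p\<in>set ws. snd p \<ge> 0) \<and> length is = m \<and> sorted_wrt (\<ge>) is
          \<and> (\<forall>i\<in>set is. i \<le> - int m)})"
proof -
  \<comment> \<open>Only simplicity, \<open>e \<noteq> 0\<close> and \<open>[h, e] = 2 e\<close> matter.\<close>
  obtain f where eigen: "br (br e f) e = sc 2 e"
    using assms(4) unfolding normalized_invariant_form_def by blast
  have "e \<noteq> 0"
    using assms(3) unfolding highest_root_vector_def by blast
  then have generates: "W = UNIV" if "lie_ideal sc br W" "e \<in> W" for W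
    using assms(1) that unfolding simple_lie_algebra_def by blast
  have "vector_space sc"
    using assms(1) unfolding simple_lie_algebra_def lie_algebra_def by blast
  then interpret vacuum_module scv sc br \<kappa> \<rho> v0
    using assms(5) unfolding basic_rep_def vacuum_module_def vacuum_module_axioms_def
    by (elim conjE) (intro conjI; assumption)
  show ?thesis
    using pbw_layer_generated_by_e_words[OF assms(6) eigen _ generates] by simp
qed

end
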